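(* (1) For every integer $n\ge 2$, $\min\{e(i): 2^{n-1}\le i\le 2^{n}\}=\lfloor n/2\rfloor$. (2) For every integer $n\ge 1$, $\max\{e(i): 2^{n-1}\le i\le 2^{n}\}=n$. (3) For every integer $n\ge 0$, $\min\{i\ge 1: e(i)=n\}=2^{n}$. (4) For every integer $n\ge 0$, $\max\{i\ge 1: e(i)=n\}=\dfrac{4^{n+1}-1}{3}$.
   Context: The Stern polynomials $B_n(t)\in\mathbb{Z}[t]$, $n\ge 0$, are defined by $B_0(t)=0$, $B_1(t)=1$, $B_{2n}(t)=tB_n(t)$ and $B_{2n+1}(t)=B_n(t)+B_{n+1}(t)$ for $n\ge 1$. For $n\ge 1$, $e(n)=\deg_t B_n(t)$. *)

theory Defs
  imports "HOL-Computational_Algebra.Polynomial"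
begin

function stern :: "nat \<Rightarrow> int poly" where
  "stern n = (if n = 0 then 0 else if n = 1 then 1
              else if even n then [:0, 1:] * stern (n div 2)
              else stern (n div 2) + stern (n div 2 + 1))"
  by auto
termination by (relation "measure id") (auto elim!: oddE)

text \<open>e(n) = degree of B_n (used for n \<ge> 1).\<close>
definition e :: "nat \<Rightarrow> nat" where
  "e n = degree (stern n)"

end

theory Submission
  imports Defs
begin

text \<open>
  All four statements follow from three facts about the degree function e:
  \<^item> the recursion e(2m) = e(m) + 1 and e(2m+1) = max (e m) (e (m+1)) for m \<ge> 1, which holds
    because every Stern polynomial B_m (m \<ge> 1) is nonzero with nonnegative coefficients,
    so no cancellation of leading terms can occur in B_m + B_(m+1);
  \<^item> the upper bound 2^(e n) \<le> n, attained at n = 2^k;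
  \<^item> the lower bound n \<le> T(e n), where T(k) = (4^(k+1) - 1)/3 is given by T 0 = 1 and
    T(k+1) = 4 T(k) + 1, attained at n = T(k).  The lower bound
  needs a strengthened invariant on the pair (m, m+1), which in turn uses that the degrees of
  adjacent Stern polynomials differ by at most one.
\<close>

declare stern.simps[simp del]

text \<open>Every n \<ge> 1 is reached from 1 by the steps m \<mapsto> 2m and m \<mapsto> 2m+1;
  the odd step may also use the hypothesis at m+1, which is smaller than 2m+1.\<close>
lemma binary_induct [consumes 1, case_names one double double_plus_one]:
  fixes n :: nat
  assumes "n \<ge> 1"
    and one: "P 1"
    and double: "\<And>m. m \<ge> 1 \<Longrightarrow> P m \<Longrightarrow> P (2 * m)"
    and double_plus_one: "\<And>m. m \<ge> 1 \<Longrightarrow> P m \<Longrightarrow> P (m + 1) \<Longrightarrow> P (2 * m + 1)"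
  shows "P n"
  using assms(1)
proof (induction n rule: less_induct)
  case (less n)
  show ?case
  proof (cases "n = 1")
    case True
    then show ?thesis using one by simp
  next
    case False
    define m where "m = n div 2"
    have m: "m \<ge> 1" "m < n"
      using less.prems False by (auto simp: m_def)
    have "n = 2 * m \<or> (n = 2 * m + 1 \<and> m + 1 < n)"
      using m unfolding m_def by presburger
    then show ?thesis
      using m less.IH double double_plus_one by auto
  qed
qed

lemma stern_0 [simp]: "stern 0 = 0"
  by (subst stern.simps) simp

lemma stern_1 [simp]: "stern 1 = 1" "stern (Suc 0) = 1"
  by (subst stern.simps, simp)+

lemma stern_double: "m \<ge> 1 \<Longrightarrow> stern (2 * m) = pCons 0 (stern m)"
  by (subst stern.simps) (simp add: mult_pCons_left)

lemma stern_double_plus_one: "m \<ge> 1 \<Longrightarrow> stern (2 * m + 1) = stern m + stern (m + 1)"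
  by (subst stern.simps) simp

text \<open>Over an ordered ring, the sum of two nonzero polynomials with nonnegative coefficients
  has no cancellation of leading terms, hence its degree is the larger of the two degrees.\<close>
lemma degree_add_nonneg_coeffs:
  fixes p q :: "'a :: linordered_idom poly"
  assumes "p \<noteq> 0" "q \<noteq> 0" "\<forall>i. coeff p i \<ge> 0" "\<forall>i. coeff q i \<ge> 0"
  shows "degree (p + q) = max (degree p) (degree q)"
proof -
  have lead_p: "coeff p (degree p) > 0" and lead_q: "coeff q (degree q) > 0"
    using assms by (metis leading_coeff_0_iff order_le_less)+
  have "coeff (p + q) (max (degree p) (degree q)) > 0"
    using assms(3,4) lead_p lead_q
    by (cases "degree p \<le> degree q") (simp_all add: max_def add_nonneg_pos add_pos_nonneg)
  then have "max (degree p) (degree q) \<le> degree (p + q)"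
    by (metis le_degree less_irrefl)
  with degree_add_le_max show ?thesis by (rule antisym)
qed

lemma stern_nonzero_nonneg:
  assumes "n \<ge> 1"
  shows "stern n \<noteq> 0 \<and> (\<forall>i. coeff (stern n) i \<ge> 0)"
  using assms
proof (induction n rule: binary_induct)
  case one
  then show ?case by (simp add: coeff_1)
next
  case (double m)
  then show ?case by (auto simp: stern_double coeff_pCons split: nat.splits)
next
  case (double_plus_one m)
  have "coeff (stern m) (degree (stern m)) > 0"
    using double_plus_one.IH(1) by (metis leading_coeff_0_iff order_le_less)
  then have "coeff (stern m + stern (m + 1)) (degree (stern m)) > 0"
    using double_plus_one.IH(2) by (simp add: add_pos_nonneg)
  then have "stern m + stern (m + 1) \<noteq> 0"
    by (metis coeff_0 less_irrefl)
  then show ?case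
    using double_plus_one.IH unfolding stern_double_plus_one[OF double_plus_one.hyps]
    by (simp add: add_nonneg_nonneg)
qed

section \<open>The degree recursion\<close>

lemma e_1 [simp]: "e 1 = 0" "e (Suc 0) = 0"
  by (simp_all add: e_def)

lemma e_double: "m \<ge> 1 \<Longrightarrow> e (2 * m) = e m + 1"
  using stern_nonzero_nonneg[of m] by (simp add: e_def stern_double)

lemma e_double_plus_one:
  assumes "m \<ge> 1"
  shows "e (2 * m + 1) = max (e m) (e (m + 1))"
  using assms stern_nonzero_nonneg[of m] stern_nonzero_nonneg[of "m + 1"]
  unfolding e_def stern_double_plus_one[OF assms] by (intro degree_add_nonneg_coeffs) auto

lemma e_2 [simp]: "e 2 = 1" "e (Suc (Suc 0)) = 1"
  using e_double[of 1] by (simp_all add: numeral_2_eq_2)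

lemma e_power_of_two: "e (2 ^ k) = k"
  by (induction k) (simp_all add: e_double)

lemma e_adjacent:
  assumes "m \<ge> 1"
  shows "e m \<le> e (m + 1) + 1 \<and> e (m + 1) \<le> e m + 1"
  using assms
proof (induction m rule: binary_induct)
  case one
  then show ?case by simp
next
  case (double m)
  then show ?case using e_double[of m] e_double_plus_one[of m] by simp
next
  case (double_plus_one m)
  have "e (2 * m + 2) = e (m + 1) + 1"
    using e_double[of "m + 1"] by simp
  then show ?case using double_plus_one e_double_plus_one[of m] by simp
qed

section \<open>Upper bound: the smallest index of a given degree\<close>

lemma e_upper_bound: "n \<ge> 1 \<Longrightarrow> 2 ^ e n \<le> n"
proof (induction n rule: binary_induct)
  case one
  then show ?case by simp
next
  case (double m)
  then show ?case by (simp add: e_double)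
next
  case (double_plus_one m)
  then show ?case using e_double_plus_one[of m] by (simp add: max_def)
qed

section \<open>Lower bound: the largest index of a given degree\<close>

text \<open>T k = (4^(k+1) - 1)/3 = 1 + 4 + ... + 4^k is the largest index n with e n = k.\<close>
fun top_index :: "nat \<Rightarrow> nat" where
  "top_index 0 = 1"
| "top_index (Suc k) = 4 * top_index k + 1"

lemma top_index_closed_form: "3 * top_index k + 1 = 4 ^ (k + 1)"
  by (induction k) auto

lemma top_index_div: "(4 ^ (k + 1) - 1) div 3 = top_index k"
  using top_index_closed_form[of k]
  by (metis add_diff_cancel_right' nonzero_mult_div_cancel_left zero_neq_numeral)

lemma top_index_pos: "top_index k \<ge> 1"
  by (cases k) auto

lemma top_index_bounds: "4 ^ k \<le> top_index k \<and> top_index k \<le> 2 * 4 ^ k"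
  using top_index_closed_form[of k] by (simp add: one_le_power)

lemma e_top_index: "e (top_index k) = k \<and> e (top_index k + 1) = k + 1"
proof (induction k)
  case 0
  then show ?case by simp
next
  case (Suc k)
  have "e (2 * top_index k) = k + 1" and "e (2 * top_index k + 1) = k + 1"
    using Suc.IH top_index_pos e_double e_double_plus_one by simp_all
  then have "e (2 * (2 * top_index k) + 1) = k + 1" and "e (2 * (2 * top_index k + 1)) = k + 2"
    using top_index_pos e_double_plus_one[of "2 * top_index k"] e_double[of "2 * top_index k + 1"]
    by (simp_all add: ac_simps)
  moreover have "top_index (Suc k) = 2 * (2 * top_index k) + 1"
    and "top_index (Suc k) + 1 = 2 * (2 * top_index k + 1)" by simp_all
  ultimately show ?case by simp
qed

text \<open>Invariant on the pair (m, m+1) yielding the lower bound.  The third clause covers the odd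
  index 2m+1, whose degree equals that of its parents when these agree.\<close>
lemma top_index_invariant:
  assumes "m \<ge> 1"
  shows "m \<le> top_index (e m) \<and> m + 1 \<le> top_index (e (m + 1))
    \<and> (e m = e (m + 1) \<longrightarrow> 2 * m + 1 \<le> top_index (e m))"
  using assms
proof (induction m rule: binary_induct)
  case one
  then show ?case by simp
next
  case (double m)
  have "e (2 * m) = e m + 1" "e (2 * m + 1) = max (e m) (e (m + 1))"
    using double.hyps by (simp_all only: e_double e_double_plus_one)
  moreover have "e m = e (m + 1) + 1 \<or> e m = e (m + 1) \<or> e (m + 1) = e m + 1"
    using e_adjacent[OF double.hyps] by linarith
  ultimately show ?case
    using double.IH by (elim disjE) simp_all
next
  case (double_plus_one m)
  have "e (2 * m + 1) = max (e m) (e (m + 1))" "e (2 * m + 1 + 1) = e (m + 1) + 1"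
    using double_plus_one.hyps e_double[of "m + 1"] by (simp_all only: e_double_plus_one) simp
  moreover have "e m = e (m + 1) + 1 \<or> e m = e (m + 1) \<or> e (m + 1) = e m + 1"
    using e_adjacent[OF double_plus_one.hyps] by linarith
  ultimately show ?case
    using double_plus_one.IH(1) by (elim disjE) simp_all
qed

lemma e_lower_bound: "n \<ge> 1 \<Longrightarrow> n \<le> top_index (e n)"
  using top_index_invariant by blast

lemma dyadic_block_pos: "2 ^ (n - 1) \<le> i \<Longrightarrow> (1::nat) \<le> i"
  using one_le_power order_trans by fastforce

lemma degree_set_dyadic_block: "{e i | i. 2^(n-1) \<le> i \<and> i \<le> 2^n} = e ` {2^(n-1)..2^n}"
  by auto

text \<open>Lower bound on the degrees in a dyadic block: an index i \<ge> 2^(n-1) with e i < n div 2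
  would exceed the largest index T (e i) < 4^(e i + 1)/3 \<le> 2^n/3 of its degree.\<close>
lemma dyadic_block_degree_ge:
  assumes i: "2 ^ (n - 1) \<le> i"
  shows "n div 2 \<le> e i"
proof (rule ccontr)
  assume "\<not> n div 2 \<le> e i"
  then have small: "2 * (e i + 1) \<le> n" by presburger
  have "3 * i + 1 \<le> 3 * top_index (e i) + 1"
    using e_lower_bound[OF dyadic_block_pos[OF i]] by simp
  also have "\<dots> = 2 ^ (2 * (e i + 1))"
    unfolding top_index_closed_form power_mult by simp
  also have "\<dots> \<le> 2 ^ n"
    using small by (rule power_increasing) simp
  also have "\<dots> = 2 * 2 ^ (n - 1)"
    using small by (cases n) simp_all
  also have "\<dots> \<le> 2 * i"
    using i by simp
  finally show False by simp
qed

text \<open>Part (1): the minimal degree on [2^(n-1), 2^n] is n div 2, attained at T k or 2 T k.\<close>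
lemma min_degree_dyadic_block:
  assumes "n \<ge> 2"
  shows "Min {e i | i. 2^(n-1) \<le> i \<and> i \<le> 2^n} = n div 2"
  unfolding degree_set_dyadic_block
proof (rule Min_eqI)
  show "finite (e ` {2^(n-1)..2^n})" by simp
next
  fix y assume "y \<in> e ` {2^(n-1)..2^n}"
  then show "n div 2 \<le> y" using dyadic_block_degree_ge by auto
next
  have "\<exists>k. n = 2 * k + 2 \<or> n = 2 * k + 1"
    using assms by presburger
  then obtain k where "n = 2 * k + 2 \<or> n = 2 * k + 1" by blast
  then show "n div 2 \<in> e ` {2^(n-1)..2^n}"
  proof
    assume n: "n = 2 * k + 2"
    have "e (2 * top_index k) = n div 2"
      using n e_top_index[of k] e_double[OF top_index_pos] by simp
    moreover have "2 * top_index k \<in> {2^(n-1)..2^n}"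
      using n top_index_bounds[of k] by (simp add: power_mult)
    ultimately show ?thesis by (metis image_eqI)
  next
    assume n: "n = 2 * k + 1"
    have "e (top_index k) = n div 2"
      using n e_top_index[of k] by simp
    moreover have "top_index k \<in> {2^(n-1)..2^n}"
      using n top_index_bounds[of k] by (simp add: power_mult)
    ultimately show ?thesis by (metis image_eqI)
  qed
qed

lemma max_degree_dyadic_block:
  assumes "n \<ge> 1"
  shows "Max {e i | i. 2^(n-1) \<le> i \<and> i \<le> 2^n} = n"
  unfolding degree_set_dyadic_block
proof (rule Max_eqI)
  show "finite (e ` {2^(n-1)..2^n})" by simp
next
  fix y assume "y \<in> e ` {2^(n-1)..2^n}"
  then obtain i where y: "y = e i" and i: "2^(n-1) \<le> i" "i \<le> 2^n" by auto
  have "(2::nat) ^ e i \<le> 2 ^ n"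
    using e_upper_bound[OF dyadic_block_pos[OF i(1)]] i(2) by linarith
  then show "y \<le> n" using y by simp
next
  have "(2::nat) ^ n \<in> {2^(n-1)..2^n}"
    by (auto intro: power_increasing)
  then show "n \<in> e ` {2^(n-1)..2^n}"
    by (metis e_power_of_two image_eqI)
qed

lemma level_set_bounded: "{i. i \<ge> 1 \<and> e i = n} \<subseteq> {1..top_index n}"
  using e_lower_bound by auto

lemma min_index_of_degree: "Min {i. i \<ge> 1 \<and> e i = n} = 2^n"
proof (rule Min_eqI)
  show "finite {i. i \<ge> 1 \<and> e i = n}"
    using level_set_bounded finite_subset by blast
next
  fix i assume "i \<in> {i. i \<ge> 1 \<and> e i = n}"
  then show "2^n \<le> i" using e_upper_bound[of i] by auto
next
  show "2^n \<in> {i. i \<ge> 1 \<and> e i = n}" by (simp add: e_power_of_two)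
qed

lemma max_index_of_degree: "Max {i. i \<ge> 1 \<and> e i = n} = (4^(n+1) - 1) div 3"
  unfolding top_index_div
proof (rule Max_eqI)
  show "finite {i. i \<ge> 1 \<and> e i = n}"
    using level_set_bounded finite_subset by blast
next
  fix i assume "i \<in> {i. i \<ge> 1 \<and> e i = n}"
  then show "i \<le> top_index n" using e_lower_bound by auto
next
  show "top_index n \<in> {i. i \<ge> 1 \<and> e i = n}"
    using e_top_index top_index_pos by simp
qed

theorem theorem4p3:
  shows "(\<forall>n::nat. n \<ge> 2 \<longrightarrow> Min {e i | i. 2^(n-1) \<le> i \<and> i \<le> 2^n} = n div 2)
       \<and> (\<forall>n::nat. n \<ge> 1 \<longrightarrow> Max {e i | i. 2^(n-1) \<le> i \<and> i \<le> 2^n} = n)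
       \<and> (\<forall>n::nat. Min {i. i \<ge> 1 \<and> e i = n} = 2^n)
       \<and> (\<forall>n::nat. Max {i. i \<ge> 1 \<and> e i = n} = (4^(n+1) - 1) div 3)"
  using min_degree_dyadic_block max_degree_dyadic_block min_index_of_degree max_index_of_degree
  by blast

end
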